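(* Let $n\ge 1$, let $x_1<x_2<\dots<x_n$ be real numbers, and let $t_0,t_1,\dots,t_n:\mathbb{R}\to\mathbb{R}$ be functions. Define the piecewise function $$t(x)=\begin{cases} t_0(x), & x<x_1,\\ t_i(x), & x_i\le x<x_{i+1}\ (1\le i\le n-1),\\ t_n(x), & x_n\le x.\end{cases}$$ Define $H_1:\mathbb{R}\to\mathbb{R}$ by $$H_1(x)=1+\int_0^{\pi/2}\left(\frac{x\sec^2 s\, e^{-x\tan s}}{\left(1+e^{-x\tan s}\right)^2}-\frac12 e^{-x^2\tan s}x^2\sec^2 s\right)ds$$ (an improper Riemann integral at $s=\pi/2$), and for $a<b$ put $I(x,a,b)=H_1(x-a)-H_1(x-b)$. Then for every real $x$, $$t(x)=\bigl(1-H_1(x-x_1)\bigr)t_0(x)+\sum_{i=1}^{n-1}I(x,x_i,x_{i+1})\,t_i(x)+H_1(x-x_n)\,t_n(x).$$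
   Context: The paper calls this "representation of a piecewise-defined function in analytic form without approximation", assuming each $t_i$ itself has such a form. *)

theory Defs
  imports "HOL-Analysis.Analysis"
begin

definition sec :: "real \<Rightarrow> real" where
  "sec s = 1 / cos s"

definition H1_integrand :: "real \<Rightarrow> real \<Rightarrow> real" where
  "H1_integrand x s =
     x * (sec s)^2 * exp (- x * tan s) / (1 + exp (- x * tan s))^2
     - 1/2 * exp (- (x^2) * tan s) * x^2 * (sec s)^2"

definition H1 :: "real \<Rightarrow> real" where
  "H1 x = 1 + Lim (at_left (pi/2)) (\<lambda>b. integral {0..b} (H1_integrand x))"

definition Iab :: "real \<Rightarrow> real \<Rightarrow> real \<Rightarrow> real" where
  "Iab x a b = H1 (x - a) - H1 (x - b)"

definition piecewise_fun :: "nat \<Rightarrow> (nat \<Rightarrow> real) \<Rightarrow> (nat \<Rightarrow> real \<Rightarrow> real) \<Rightarrow> real \<Rightarrow> real" where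
  "piecewise_fun n xs ts y =
     (if y < xs 1 then ts 0 y
      else if xs n \<le> y then ts n y
      else ts (THE i. 1 \<le> i \<and> i \<le> n - 1 \<and> xs i \<le> y \<and> y < xs (Suc i)) y)"

end

theory Submission
  imports Defs "HOL-Real_Asymp.Real_Asymp"
begin

text \<open>The integrand of \<open>H1 x\<close> is the derivative of
  \<open>1 / (1 + exp (- x tan s)) + exp (- x\<^sup>2 tan s) / 2\<close>, which equals \<open>1\<close> at \<open>s = 0\<close>
  and, as \<open>tan s \<rightarrow> \<infinity>\<close>, tends to \<open>1\<close> for \<open>x \<ge> 0\<close> and to \<open>0\<close> for \<open>x < 0\<close>.
  Hence \<open>H1\<close> is exactly the Heaviside step function with \<open>H1 0 = 1\<close>, every \<open>Iab x a b\<close>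
  is the indicator of \<open>[a, b)\<close>, and the right-hand side selects the one piece whose
  interval contains \<open>x\<close>.\<close>

definition H1_primitive :: "real \<Rightarrow> real \<Rightarrow> real" where
  "H1_primitive x s = 1 / (1 + exp (- x * tan s)) + 1/2 * exp (- (x^2) * tan s)"

lemma H1_primitive_has_derivative:
  assumes "cos s \<noteq> 0"
  shows "(H1_primitive x has_real_derivative H1_integrand x s) (at s)"
proof -
  have denom: "1 + exp (- x * tan s) \<noteq> 0"
    using exp_gt_zero[of "- x * tan s"] by linarith
  show ?thesis
    unfolding H1_primitive_def H1_integrand_def sec_def
    apply (rule derivative_eq_intros refl DERIV_tan assms denom)+
    using assms denom by (simp add: field_simps power2_eq_square)
qed

lemma integral_H1_integrand:
  assumes "0 \<le> b" "b < pi/2"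
  shows "integral {0..b} (H1_integrand x) = H1_primitive x b - 1"
proof -
  have "(H1_integrand x has_integral H1_primitive x b - H1_primitive x 0) {0..b}"
  proof (rule fundamental_theorem_of_calculus[OF assms(1)])
    fix s assume "s \<in> {0..b}"
    then have "cos s \<noteq> 0"
      using assms cos_gt_zero_pi[of s] by auto
    then show "(H1_primitive x has_vector_derivative H1_integrand x s) (at s within {0..b})"
      using H1_primitive_has_derivative
      by (auto simp: has_real_derivative_iff_has_vector_derivative
               intro: has_vector_derivative_at_within)
  qed
  then show ?thesis
    by (simp add: integral_unique H1_primitive_def)
qed

lemma H1_primitive_tendsto:
  "(H1_primitive x \<longlongrightarrow> (if 0 \<le> x then 1 else 0)) (at_left (pi/2))"
proof -
  have "((\<lambda>u. 1 / (1 + exp (- x * u)) + 1/2 * exp (- (x^2) * u))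
          \<longlongrightarrow> (if 0 \<le> x then 1 else 0)) at_top"
  proof (cases x "0::real" rule: linorder_cases)
    case less
    define c where "c = - x"
    have "c > 0" "x = - c"
      using less by (auto simp: c_def)
    have "((\<lambda>u. 1 / (1 + exp (c * u))) \<longlongrightarrow> 0) at_top"
      using \<open>c > 0\<close> by real_asymp
    moreover have "((\<lambda>u. exp (- (c^2) * u)) \<longlongrightarrow> 0) at_top"
      using \<open>c > 0\<close> by real_asymp
    ultimately have "((\<lambda>u. 1 / (1 + exp (c * u)) + 1/2 * exp (- (c^2) * u)) \<longlongrightarrow> 0 + 1/2 * 0) at_top"
      by (intro tendsto_intros)
    with \<open>x = - c\<close> less show ?thesis
      by simp
  next
    case equal
    then show ?thesis by simp
  next
    case greater
    then show ?thesis by simp real_asymp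
  qed
  from filterlim_compose[OF this filterlim_tan_at_left] show ?thesis
    unfolding H1_primitive_def[abs_def] by (simp add: comp_def)
qed

lemma H1_eq_step: "H1 x = (if 0 \<le> x then 1 else 0)"
proof -
  have "eventually (\<lambda>b. H1_primitive x b - 1 = integral {0..b} (H1_integrand x)) (at_left (pi/2))"
    using eventually_at_left_real[of 0 "pi/2"]
    by (rule eventually_mono) (use integral_H1_integrand in auto)
  with tendsto_diff[OF H1_primitive_tendsto tendsto_const]
  have "((\<lambda>b. integral {0..b} (H1_integrand x)) \<longlongrightarrow> (if 0 \<le> x then 1 else 0) - 1) (at_left (pi/2))"
    by (rule Lim_transform_eventually)
  then show ?thesis
    by (simp add: H1_def tendsto_Lim[OF trivial_limit_at_left_real])
qed

lemma Iab_eq_indicator: "a < b \<Longrightarrow> Iab x a b = (if a \<le> x \<and> x < b then 1 else 0)"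
  by (auto simp: Iab_def H1_eq_step)

lemma ex_breakpoint_interval:
  fixes xs :: "nat \<Rightarrow> 'a :: linorder"
  assumes "1 \<le> n" "xs 1 \<le> x" "x < xs n"
  shows "\<exists>k. 1 \<le> k \<and> k \<le> n - 1 \<and> xs k \<le> x \<and> x < xs (Suc k)"
  using assms
proof (induction n rule: nat_induct_at_least)
  case base
  then show ?case by simp
next
  case (Suc n)
  show ?case
  proof (cases "x < xs n")
    case True
    with Suc show ?thesis by force
  next
    case False
    with Suc show ?thesis by auto
  qed
qed

context
  fixes n :: nat and xs :: "nat \<Rightarrow> real"
  assumes xs_step: "\<And>i. 1 \<le> i \<Longrightarrow> i < n \<Longrightarrow> xs i < xs (Suc i)"
begin

lemma breakpoints_le: "1 \<le> i \<Longrightarrow> i \<le> j \<Longrightarrow> j \<le> n \<Longrightarrow> xs i \<le> xs j"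
proof (rule lift_Suc_mono_le_ivl[of "{1..<n}"])
  show "xs k \<le> xs (Suc k)" if "k \<in> {1..<n}" for k
    using xs_step[of k] that by simp
qed auto

lemma breakpoint_interval_unique:
  assumes "1 \<le> i" "i \<le> n - 1" "xs i \<le> x" "x < xs (Suc i)"
    and "1 \<le> j" "j \<le> n - 1" "xs j \<le> x" "x < xs (Suc j)"
  shows "i = j"
proof (rule ccontr)
  assume "i \<noteq> j"
  then consider "Suc i \<le> j" | "Suc j \<le> i" by linarith
  then show False
  proof cases
    case 1
    then have "xs (Suc i) \<le> xs j" using assms by (intro breakpoints_le) auto
    with assms show False by linarith
  next
    case 2
    then have "xs (Suc j) \<le> xs i" using assms by (intro breakpoints_le) auto
    with assms show False by linarith
  qed
qed

lemma sum_breakpoint_interval_indicators: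
  fixes f :: "nat \<Rightarrow> 'a :: semiring_1"
  assumes "1 \<le> n"
  shows "(\<Sum>i = 1..n - 1. (if xs i \<le> x \<and> x < xs (Suc i) then 1 else 0) * f i) =
    (if xs 1 \<le> x \<and> x < xs n
     then f (THE i. 1 \<le> i \<and> i \<le> n - 1 \<and> xs i \<le> x \<and> x < xs (Suc i)) else 0)"
proof (cases "xs 1 \<le> x \<and> x < xs n")
  case True
  then obtain k where k: "1 \<le> k" "k \<le> n - 1" "xs k \<le> x" "x < xs (Suc k)"
    using ex_breakpoint_interval assms by blast
  then have "(THE i. 1 \<le> i \<and> i \<le> n - 1 \<and> xs i \<le> x \<and> x < xs (Suc i)) = k"
    by (intro the_equality) (auto intro: breakpoint_interval_unique)
  moreover have "(\<Sum>i = 1..n - 1. (if xs i \<le> x \<and> x < xs (Suc i) then 1 else 0) * f i) =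
      (\<Sum>i = 1..n - 1. if i = k then f i else 0)"
  proof (intro sum.cong refl)
    fix i assume i: "i \<in> {1..n - 1}"
    show "(if xs i \<le> x \<and> x < xs (Suc i) then 1 else 0) * f i = (if i = k then f i else 0)"
    proof (cases "i = k")
      case True
      with k show ?thesis by simp
    next
      case False
      with i breakpoint_interval_unique[OF k, of i] have "\<not> (xs i \<le> x \<and> x < xs (Suc i))"
        by fastforce
      with False show ?thesis by auto
    qed
  qed
  ultimately show ?thesis
    using True k by simp
next
  case False
  have "\<not> (xs i \<le> x \<and> x < xs (Suc i))" if "i \<in> {1..n - 1}" for i
  proof -
    have "xs 1 \<le> xs i" "xs (Suc i) \<le> xs n"
      using that assms by (auto intro: breakpoints_le)
    with False show ?thesis by auto
  qed
  with False show ?thesis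
    by (auto intro!: sum.neutral)
qed

end

theorem theorem1:
  fixes n :: nat and xs :: "nat \<Rightarrow> real" and ts :: "nat \<Rightarrow> real \<Rightarrow> real" and x :: real
  assumes "n \<ge> 1"
    and "\<And>i. 1 \<le> i \<Longrightarrow> i < n \<Longrightarrow> xs i < xs (Suc i)"
  shows "piecewise_fun n xs ts x =
           (1 - H1 (x - xs 1)) * ts 0 x
           + (\<Sum>i = 1..n - 1. Iab x (xs i) (xs (Suc i)) * ts i x)
           + H1 (x - xs n) * ts n x"
proof -
  have "(\<Sum>i = 1..n - 1. Iab x (xs i) (xs (Suc i)) * ts i x) =
      (\<Sum>i = 1..n - 1. (if xs i \<le> x \<and> x < xs (Suc i) then 1 else 0) * ts i x)"
  proof (intro sum.cong refl)
    fix i assume "i \<in> {1..n - 1}"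
    then have "xs i < xs (Suc i)"
      using assms by auto
    then show "Iab x (xs i) (xs (Suc i)) * ts i x = (if xs i \<le> x \<and> x < xs (Suc i) then 1 else 0) * ts i x"
      by (simp add: Iab_eq_indicator)
  qed
  also have "\<dots> = (if xs 1 \<le> x \<and> x < xs n
      then ts (THE i. 1 \<le> i \<and> i \<le> n - 1 \<and> xs i \<le> x \<and> x < xs (Suc i)) x else 0)"
    by (rule sum_breakpoint_interval_indicators[of n xs, OF assms(2,1)])
  finally have sum_eq: "(\<Sum>i = 1..n - 1. Iab x (xs i) (xs (Suc i)) * ts i x) = \<dots>" .
  have "xs 1 \<le> xs n"
    using breakpoints_le assms by blast
  then show ?thesis
    unfolding sum_eq piecewise_fun_def H1_eq_step by auto
qed

end
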